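(* Let $a<b$, $k>0$, $\lambda\in(0,\pi/2]$, and $f\in C^3([a,b])$ with $f'(a)=f'(b)=0$. Then there is a constant $C$ (depending only on $f,k,\lambda,a,b$) such that for every sequence $\{\epsilon_n\}$ with $\epsilon_n\in J_n$, the unique solution $y_{\epsilon_n}$ of $\epsilon_n y''+ky=f(t)$ on $[a,b]$, $y'(a)=y'(b)=0$, satisfies $$\sup_{t\in[a,b]}\Big|y_{\epsilon_n}(t)-\frac{f(t)}{k}\Big|\le C\,\epsilon_n\quad\text{for all }n.$$
   Context: For a fixed constant $\lambda\in(0,\pi/2]$ and $n=0,1,2,\dots$ define the closed intervals $$J_n=\left[\,k\left(\frac{b-a}{(n+1)\pi-\lambda}\right)^2,\ k\left(\frac{b-a}{n\pi+\lambda}\right)^2\,\right].$$ Note that $\epsilon\in J_n$ iff $\sqrt{k/\epsilon}\,(b-a)\in[n\pi+\lambda,(n+1)\pi-\lambda]$. *)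

theory Defs
  imports "HOL-Analysis.Analysis"
begin

definition J :: "real \<Rightarrow> real \<Rightarrow> real \<Rightarrow> real \<Rightarrow> nat \<Rightarrow> real set" where
  "J k lam a b n =
     {k * ((b - a) / ((real n + 1) * pi - lam))^2 .. k * ((b - a) / (real n * pi + lam))^2}"

definition is_bvp_solution ::
  "real \<Rightarrow> real \<Rightarrow> (real \<Rightarrow> real) \<Rightarrow> real \<Rightarrow> real \<Rightarrow> (real \<Rightarrow> real) \<Rightarrow> bool" where
  "is_bvp_solution eps k f a b y \<longleftrightarrow>
     (\<exists>y1 y2. (\<forall>t\<in>{a..b}.
                 (y has_real_derivative y1 t) (at t within {a..b}) \<and>
                 (y1 has_real_derivative y2 t) (at t within {a..b}) \<and>
                 eps * y2 t + k * y t = f t) \<and>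
              y1 a = 0 \<and> y1 b = 0)"

end

theory Submission
  imports Defs
begin

text \<open>Put \<open>Z = k y - f\<close> and \<open>w = sqrt (k / \<epsilon>)\<close>. Then \<open>Z'' + w\<^sup>2 Z = -f''\<close> with
  \<open>Z'(a) = Z'(b) = 0\<close>. Variation of constants with the phase \<open>w (t - a)\<close> gives two
  quantities \<open>P\<close>, \<open>Q\<close> with \<open>w Z = P sin + Q cos - f''/w\<close> whose derivatives are
  \<open>O(|f'''|/w)\<close>, so both vary by \<open>O(1/w)\<close> over \<open>[a,b]\<close>. The boundary conditions give
  \<open>P(a) = 0\<close> and \<open>P(b) = sin (w (b - a)) R\<close>, \<open>Q(b) = cos (w (b - a)) R\<close> for one number \<open>R\<close>;
  for \<open>\<epsilon> \<in> J\<^sub>n\<close> the sine is at least \<open>sin \<lambda>\<close> in absolute value, so \<open>R = O(1/w)\<close>.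
  Hence \<open>Z = O(1/w\<^sup>2) = O(\<epsilon>)\<close>, uniformly in \<open>n\<close>.\<close>

lemma sin_ge_sin_off_multiples_of_pi:
  assumes "0 < lam" "lam \<le> pi / 2"
    and "real n * pi + lam \<le> x" "x \<le> (real n + 1) * pi - lam"
  shows "sin lam \<le> \<bar>sin x\<bar>"
proof -
  define y where "y = x - real n * pi"
  have "sin x = sin y * (-1) ^ n"
    by (simp add: y_def sin_diff)
  then have abs_sin_x: "\<bar>sin x\<bar> = \<bar>sin y\<bar>"
    by (simp add: abs_mult)
  have y: "lam \<le> y" "y \<le> pi - lam"
    using assms by (auto simp: y_def algebra_simps)
  have "sin lam \<le> sin y"
  proof (cases "y \<le> pi / 2")
    case True
    then show ?thesis using sin_mono_le_eq[of lam y] y assms by auto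
  next
    case False
    then have "sin lam \<le> sin (pi - y)"
      using sin_mono_le_eq[of lam "pi - y"] y assms by auto
    then show ?thesis by simp
  qed
  moreover have "0 \<le> sin y"
    using y assms by (intro sin_ge_zero) auto
  ultimately show ?thesis
    using abs_sin_x by simp
qed

lemma mem_J_imp_scaled_length_bounds:
  assumes "eps \<in> J k lam a b n" and "a < b" and "k > 0" and "0 < lam" and "lam < pi"
  shows "eps > 0"
    and "real n * pi + lam \<le> sqrt (k / eps) * (b - a)"
    and "sqrt (k / eps) * (b - a) \<le> (real n + 1) * pi - lam"
proof -
  define L where "L = b - a"
  define E1 where "E1 = real n * pi + lam"
  define E2 where "E2 = (real n + 1) * pi - lam"
  have "0 \<le> real n * pi"
    by simp
  then have L: "L > 0" and E1: "E1 > 0" and E2: "E2 > 0"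
    unfolding L_def E1_def E2_def distrib_right using assms by linarith+
  have lower: "k * (L / E2)\<^sup>2 \<le> eps" and upper: "eps \<le> k * (L / E1)\<^sup>2"
    using assms(1) by (auto simp: J_def L_def E1_def E2_def)
  have "0 < k * (L / E2)\<^sup>2"
    using L E2 \<open>k > 0\<close> by simp
  then show eps: "eps > 0"
    using lower by linarith
  have scaled: "sqrt (k / eps) * L = sqrt (k * L\<^sup>2 / eps)"
    using L by (simp add: real_sqrt_mult real_sqrt_divide)
  have "E1\<^sup>2 \<le> k * L\<^sup>2 / eps"
    using upper eps E1 by (simp add: field_simps power_divide)
  then show "real n * pi + lam \<le> sqrt (k / eps) * (b - a)"
    unfolding L_def[symmetric] E1_def[symmetric] scaled by (rule real_le_rsqrt)
  have "k * L\<^sup>2 / eps \<le> E2\<^sup>2"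
    using lower eps E2 by (simp add: field_simps power_divide)
  then have "sqrt (k * L\<^sup>2 / eps) \<le> E2"
    using E2 real_sqrt_le_mono by fastforce
  then show "sqrt (k / eps) * (b - a) \<le> (real n + 1) * pi - lam"
    unfolding L_def[symmetric] E2_def[symmetric] scaled .
qed

lemma abs_diff_le_by_derivative_bound:
  assumes "\<And>t. t \<in> {a..b} \<Longrightarrow> (h has_real_derivative h' t) (at t within {a..b})"
    and "\<And>t. t \<in> {a..b} \<Longrightarrow> \<bar>h' t\<bar> \<le> B"
    and "u \<in> {a..b}" "v \<in> {a..b}"
  shows "\<bar>h u - h v\<bar> \<le> B * (b - a)"
proof -
  have "\<bar>h u - h v\<bar> \<le> B * \<bar>u - v\<bar>"
    using field_differentiable_bound[of "{a..b}" h h' B u v] assms by auto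
  also have "\<dots> \<le> B * (b - a)"
    using assms by (intro mult_left_mono) (auto intro: order_trans[OF abs_ge_zero])
  finally show ?thesis .
qed

locale forced_oscillator =
  fixes a b w :: real and Z Z1 Z2 g g1 :: "real \<Rightarrow> real"
  assumes w_pos: "w > 0"
    and Z_deriv: "\<And>t. t \<in> {a..b} \<Longrightarrow> (Z has_real_derivative Z1 t) (at t within {a..b})"
    and Z1_deriv: "\<And>t. t \<in> {a..b} \<Longrightarrow> (Z1 has_real_derivative Z2 t) (at t within {a..b})"
    and g_deriv: "\<And>t. t \<in> {a..b} \<Longrightarrow> (g has_real_derivative g1 t) (at t within {a..b})"
    and oscillator_eq: "\<And>t. t \<in> {a..b} \<Longrightarrow> Z2 t + w\<^sup>2 * Z t = g t"
begin

lemma w_nonzero: "w \<noteq> 0"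
  using w_pos by simp

text \<open>\<open>(P, Q)\<close> is \<open>(Z', w Z - g / w)\<close> rotated back by the phase \<open>w (t - a)\<close>; for a constant
  forcing term both would be constant.\<close>

definition P :: "real \<Rightarrow> real" where
  "P t = Z1 t * cos (w * (t - a)) + w * Z t * sin (w * (t - a)) - g t * sin (w * (t - a)) / w"

definition Q :: "real \<Rightarrow> real" where
  "Q t = w * Z t * cos (w * (t - a)) - Z1 t * sin (w * (t - a)) - g t * cos (w * (t - a)) / w"

lemma P_deriv:
  assumes "t \<in> {a..b}"
  shows "(P has_real_derivative - g1 t * sin (w * (t - a)) / w) (at t within {a..b})"
proof -
  have Z2_eq: "Z2 t = g t - w\<^sup>2 * Z t"
    using oscillator_eq[OF assms] by linarith
  show ?thesis
    unfolding P_def[abs_def]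
    by (rule derivative_eq_intros Z_deriv[OF assms] Z1_deriv[OF assms] g_deriv[OF assms] w_nonzero refl)+
       (simp add: Z2_eq w_nonzero field_simps power2_eq_square)
qed

lemma Q_deriv:
  assumes "t \<in> {a..b}"
  shows "(Q has_real_derivative - g1 t * cos (w * (t - a)) / w) (at t within {a..b})"
proof -
  have Z2_eq: "Z2 t = g t - w\<^sup>2 * Z t"
    using oscillator_eq[OF assms] by linarith
  show ?thesis
    unfolding Q_def[abs_def]
    by (rule derivative_eq_intros Z_deriv[OF assms] Z1_deriv[OF assms] g_deriv[OF assms] w_nonzero refl)+
       (simp add: Z2_eq w_nonzero field_simps power2_eq_square)
qed

lemma scaled_Z_eq: "w * Z t = P t * sin (w * (t - a)) + Q t * cos (w * (t - a)) + g t / w"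
proof -
  have "(sin (w * (t - a)))\<^sup>2 + (cos (w * (t - a)))\<^sup>2 = 1"
    by simp
  then show ?thesis
    unfolding P_def Q_def divide_inverse by algebra
qed

lemma PQ_variation:
  assumes g1_bound: "\<And>t. t \<in> {a..b} \<Longrightarrow> \<bar>g1 t\<bar> \<le> M"
    and "u \<in> {a..b}" "v \<in> {a..b}"
  shows "\<bar>P u - P v\<bar> \<le> M / w * (b - a)" and "\<bar>Q u - Q v\<bar> \<le> M / w * (b - a)"
proof -
  have bound: "\<bar>- g1 t * c / w\<bar> \<le> M / w" if "t \<in> {a..b}" "\<bar>c\<bar> \<le> 1" for t c
  proof -
    have "\<bar>g1 t * c\<bar> \<le> \<bar>g1 t\<bar>"
      using that(2) by (simp add: abs_mult mult_left_le)
    then have "\<bar>g1 t * c\<bar> \<le> M"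
      using g1_bound[OF that(1)] by linarith
    then show ?thesis
      using w_pos by (simp add: abs_mult divide_right_mono)
  qed
  show "\<bar>P u - P v\<bar> \<le> M / w * (b - a)"
    using abs_diff_le_by_derivative_bound[OF P_deriv bound assms(2,3)] abs_sin_le_one by blast
  show "\<bar>Q u - Q v\<bar> \<le> M / w * (b - a)"
    using abs_diff_le_by_derivative_bound[OF Q_deriv bound assms(2,3)] abs_cos_le_one by blast
qed

lemma neumann_bound:
  assumes "a < b" and "Z1 a = 0" and "Z1 b = 0"
    and s: "s > 0" "s \<le> \<bar>sin (w * (b - a))\<bar>"
    and g_bound: "\<And>t. t \<in> {a..b} \<Longrightarrow> \<bar>g t\<bar> \<le> M0"
    and g1_bound: "\<And>t. t \<in> {a..b} \<Longrightarrow> \<bar>g1 t\<bar> \<le> M1"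
    and t: "t \<in> {a..b}"
  shows "\<bar>Z t\<bar> \<le> (2 * M1 * (b - a) + M1 * (b - a) / s + M0) / w\<^sup>2"
proof -
  define V where "V = M1 / w * (b - a)"
  define R where "R = w * Z b - g b / w"
  have ends: "a \<in> {a..b}" "b \<in> {a..b}"
    using \<open>a < b\<close> by auto
  have Pa: "P a = 0" and Pb: "P b = sin (w * (b - a)) * R" and Qb: "Q b = cos (w * (b - a)) * R"
    using \<open>Z1 a = 0\<close> \<open>Z1 b = 0\<close> by (simp_all add: P_def Q_def R_def algebra_simps)
  have "s * \<bar>R\<bar> \<le> V"
    using PQ_variation(1)[OF g1_bound ends(2,1)] s(2) unfolding Pa Pb V_def
    by (simp add: abs_mult) (meson abs_ge_zero mult_right_mono order_trans)
  then have R: "\<bar>R\<bar> \<le> V / s"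
    using s(1) by (simp add: field_simps)
  have "\<bar>Q b\<bar> \<le> \<bar>R\<bar>"
    unfolding Qb abs_mult by (simp add: mult_left_le_one_le)
  then have Qt: "\<bar>Q t\<bar> \<le> V / s + V"
    using PQ_variation(2)[OF g1_bound t ends(2)] R unfolding V_def by linarith
  have Pt: "\<bar>P t\<bar> \<le> V"
    using PQ_variation(1)[OF g1_bound t ends(1)] Pa unfolding V_def by simp
  have "\<bar>P t * sin (w * (t - a))\<bar> \<le> \<bar>P t\<bar>" "\<bar>Q t * cos (w * (t - a))\<bar> \<le> \<bar>Q t\<bar>"
    by (simp_all add: abs_mult mult_right_le_one_le)
  moreover have "\<bar>g t / w\<bar> \<le> M0 / w"
    using g_bound[OF t] w_pos by (simp add: divide_right_mono)
  ultimately have "\<bar>w * Z t\<bar> \<le> V + (V / s + V) + M0 / w"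
    unfolding scaled_Z_eq using Pt Qt by linarith
  then have "w * \<bar>Z t\<bar> \<le> V + (V / s + V) + M0 / w"
    using w_pos by (simp add: abs_mult)
  also have "\<dots> = (2 * M1 * (b - a) + M1 * (b - a) / s + M0) / w"
    using w_pos s(1) by (simp add: V_def field_simps)
  finally show ?thesis
    using w_pos by (simp add: field_simps power2_eq_square)
qed

end

lemma bvp_solution_error_bound:
  assumes "a < b" and "k > 0" and "eps > 0"
    and f_deriv: "\<And>t. t \<in> {a..b} \<Longrightarrow> (f has_real_derivative f1 t) (at t within {a..b})"
    and f1_deriv: "\<And>t. t \<in> {a..b} \<Longrightarrow> (f1 has_real_derivative f2 t) (at t within {a..b})"
    and f2_deriv: "\<And>t. t \<in> {a..b} \<Longrightarrow> (f2 has_real_derivative f3 t) (at t within {a..b})"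
    and "f1 a = 0" and "f1 b = 0"
    and f2_bound: "\<And>t. t \<in> {a..b} \<Longrightarrow> \<bar>f2 t\<bar> \<le> M2"
    and f3_bound: "\<And>t. t \<in> {a..b} \<Longrightarrow> \<bar>f3 t\<bar> \<le> M3"
    and s: "s > 0" "s \<le> \<bar>sin (sqrt (k / eps) * (b - a))\<bar>"
    and "is_bvp_solution eps k f a b y" and t: "t \<in> {a..b}"
  shows "\<bar>y t - f t / k\<bar> \<le> (2 * M3 * (b - a) + M3 * (b - a) / s + M2) / k\<^sup>2 * eps"
proof -
  obtain y1 y2 where
    y_deriv: "\<And>t. t \<in> {a..b} \<Longrightarrow> (y has_real_derivative y1 t) (at t within {a..b})"
    and y1_deriv: "\<And>t. t \<in> {a..b} \<Longrightarrow> (y1 has_real_derivative y2 t) (at t within {a..b})"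
    and y_eq: "\<And>t. t \<in> {a..b} \<Longrightarrow> eps * y2 t + k * y t = f t"
    and "y1 a = 0" "y1 b = 0"
    using \<open>is_bvp_solution eps k f a b y\<close> unfolding is_bvp_solution_def by blast
  define w where "w = sqrt (k / eps)"
  have w2: "w\<^sup>2 = k / eps"
    using \<open>k > 0\<close> \<open>eps > 0\<close> by (simp add: w_def)
  interpret forced_oscillator a b w "\<lambda>t. k * y t - f t" "\<lambda>t. k * y1 t - f1 t"
    "\<lambda>t. k * y2 t - f2 t" "\<lambda>t. - f2 t" "\<lambda>t. - f3 t"
  proof
    fix t assume t: "t \<in> {a..b}"
    have "k * y2 t - f2 t + k / eps * (k * y t - f t) = - f2 t + k / eps * (eps * y2 t + k * y t - f t)"
      using \<open>eps > 0\<close> by (simp add: field_simps)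
    then show "k * y2 t - f2 t + w\<^sup>2 * (k * y t - f t) = - f2 t"
      unfolding w2 y_eq[OF t] by simp
  qed (use \<open>k > 0\<close> \<open>eps > 0\<close> in \<open>auto simp: w_def intro!: derivative_eq_intros
         y_deriv y1_deriv f_deriv f1_deriv f2_deriv\<close>)
  define D where "D = 2 * M3 * (b - a) + M3 * (b - a) / s + M2"
  have "\<bar>k * y t - f t\<bar> \<le> D / w\<^sup>2"
    unfolding D_def using \<open>f1 a = 0\<close> \<open>f1 b = 0\<close> \<open>y1 a = 0\<close> \<open>y1 b = 0\<close> f2_bound f3_bound s t
    by (intro neumann_bound[OF \<open>a < b\<close>]) (auto simp: w_def)
  also have "\<dots> = k * (D / k\<^sup>2 * eps)"
    unfolding w2 using \<open>k > 0\<close> by (simp add: power2_eq_square)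
  finally have "\<bar>k * y t - f t\<bar> / k \<le> D / k\<^sup>2 * eps"
    using \<open>k > 0\<close> by (simp add: divide_le_eq mult.commute)
  moreover have "\<bar>y t - f t / k\<bar> = \<bar>k * y t - f t\<bar> / k"
    using \<open>k > 0\<close> by (simp add: field_simps flip: abs_div)
  ultimately show ?thesis
    unfolding D_def by simp
qed

lemma bounded_on_interval:
  fixes g :: "real \<Rightarrow> real"
  assumes "continuous_on {a..b} g"
  obtains M where "\<And>t. t \<in> {a..b} \<Longrightarrow> \<bar>g t\<bar> \<le> M"
proof -
  have "bounded (g ` {a..b})"
    by (intro compact_imp_bounded compact_continuous_image assms) auto
  then show ?thesis
    using that unfolding bounded_real by blast
qed

theorem mainTheorem4:
  fixes a b k lam :: real and f f1 f2 f3 :: "real \<Rightarrow> real"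
  assumes "a < b" and "k > 0" and "0 < lam" and "lam \<le> pi / 2"
    and "\<And>t. t \<in> {a..b} \<Longrightarrow> (f has_real_derivative f1 t) (at t within {a..b})"
    and "\<And>t. t \<in> {a..b} \<Longrightarrow> (f1 has_real_derivative f2 t) (at t within {a..b})"
    and "\<And>t. t \<in> {a..b} \<Longrightarrow> (f2 has_real_derivative f3 t) (at t within {a..b})"
    and "continuous_on {a..b} f3"
    and "f1 a = 0" and "f1 b = 0"
  shows "\<exists>C. \<forall>n. \<forall>eps \<in> J k lam a b n. \<forall>y. is_bvp_solution eps k f a b y \<longrightarrow>
           (\<forall>t\<in>{a..b}. \<bar>y t - f t / k\<bar> \<le> C * eps)"
proof -
  obtain M3 where M3: "\<And>t. t \<in> {a..b} \<Longrightarrow> \<bar>f3 t\<bar> \<le> M3"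
    using bounded_on_interval[OF assms(8)] by blast
  obtain M2 where M2: "\<And>t. t \<in> {a..b} \<Longrightarrow> \<bar>f2 t\<bar> \<le> M2"
    using bounded_on_interval[OF DERIV_continuous_on[OF assms(7)]] by blast
  have "sin lam > 0"
    using assms(3,4) pi_gt3 by (intro sin_gt_zero) auto
  have "lam < pi"
    using assms(4) pi_gt_zero by linarith
  show ?thesis
  proof (intro exI allI ballI impI)
    fix n eps y t
    assume "eps \<in> J k lam a b n" "is_bvp_solution eps k f a b y" "t \<in> {a..b}"
    note length_bounds = mem_J_imp_scaled_length_bounds[OF this(1) assms(1,2,3) \<open>lam < pi\<close>]
    show "\<bar>y t - f t / k\<bar> \<le> (2 * M3 * (b - a) + M3 * (b - a) / sin lam + M2) / k\<^sup>2 * eps"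
      by (rule bvp_solution_error_bound[OF assms(1,2) length_bounds(1) assms(5-7,9,10) M2 M3
            \<open>sin lam > 0\<close> sin_ge_sin_off_multiples_of_pi])
         (use assms(3,4) length_bounds \<open>eps \<in> J k lam a b n\<close> \<open>is_bvp_solution eps k f a b y\<close>
              \<open>t \<in> {a..b}\<close> in auto)
  qed
qed

end
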